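(* Consider the reliable facility location problem described in the context, and define the decision-dependent set $\mathcal U^k(x)=\{u\in\mathbb R^{|I|}_+: \sum_{j\in J}u_j\le k,\ u_j\le x_{d,j}\ \forall j\in J,\ u_i=0\ \forall i\notin J\}$. If $C\ge\max_{i,j}c_{ij}$ and $\theta_i\le 0$ for all $i\in I$, then the problem $\min_{(x_c,x_d)\in\mathcal X}(1-\rho)\sum_{i\in I}\sum_{j\in J}c_{ij}x_{c,ij}+\rho\max_{u\in\mathcal U^0}\min_{(y_1,y_2)\in\mathcal Y(x,u)}\Big(\sum_{i\in I}\sum_{j\in J}c_{ij}y_{1,ij}+\sum_{i\in I}Cy_{2,i}\Big)$ is equivalent to the same problem with $\mathcal U^0$ replaced by $\mathcal U^k(x)$; in particular the two optimal values coincide.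
   Context: $I$ is a finite set of client sites and $J\subseteq I$ the set of potential facility sites; $d_i\ge 0$ is the demand at $i$; $c_{ij}\ge 0$ is the unit cost of serving $i$ from $j$, with $c_{ii}=0$; $A_j$ is the capacity of site $j$; $p$ and $k$ are positive integers; $\rho\in[0,1]$; $C$ is the unit penalty for unmet demand; $\theta_i$ is a demand-change parameter. First stage: $\mathcal X=\{(x_c,x_d)\in\mathbb R^{|I|\times|J|}_+\times\{0,1\}^{|J|}: \sum_{j\in J}x_{d,j}=p,\ \sum_{j\in J}x_{c,ij}\ge d_i\ \forall i\in I,\ \sum_{i\in I}x_{c,ij}\le A_jx_{d,j}\ \forall j\in J\}$. Uncertainty (disruptions): $\mathcal U^0=\{u\in\{0,1\}^{|I|}: \sum_{i\in I}u_i\le k\}$. Recourse: $\mathcal Y(x,u)=\{(y_1,y_2)\in\mathbb R^{|I||J|}_+\times\mathbb R^{|I|}_+: \sum_{j\in J}y_{1,ij}+y_{2,i}\ge(1+\theta_iu_i)d_i\ \forall i\in I,\ \sum_{i\in I}y_{1,ij}\le A_jx_{d,j}\ \forall j\in J,\ \sum_{i\in I}y_{1,ij}\le A_j(1-u_j)\ \forall j\in J\}$. Two formulations are called equivalent if they have the same optimal value and any optimal first-stage solution of one is optimal for the other, and vice versa. *)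

theory Defs
  imports Complex_Main
begin

text \<open>Vectors indexed by I or I\<times>J are functions; only their values
on the index sets matter.\<close>

definition first_stage ::
  "'a set \<Rightarrow> 'a set \<Rightarrow> ('a \<Rightarrow> real) \<Rightarrow> ('a \<Rightarrow> real) \<Rightarrow> nat
   \<Rightarrow> (('a \<Rightarrow> 'a \<Rightarrow> real) \<times> ('a \<Rightarrow> real)) set" where
  "first_stage I J d A p = {(xc, xd).
      (\<forall>i\<in>I. \<forall>j\<in>J. xc i j \<ge> 0) \<and> (\<forall>j\<in>J. xd j \<in> {0, 1}) \<and>
      (\<Sum>j\<in>J. xd j) = real p \<and>
      (\<forall>i\<in>I. (\<Sum>j\<in>J. xc i j) \<ge> d i) \<and>
      (\<forall>j\<in>J. (\<Sum>i\<in>I. xc i j) \<le> A j * xd j)}"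

definition U0 :: "'a set \<Rightarrow> nat \<Rightarrow> ('a \<Rightarrow> real) set" where
  "U0 I k = {u. (\<forall>i\<in>I. u i \<in> {0, 1}) \<and> (\<forall>i. i \<notin> I \<longrightarrow> u i = 0) \<and>
                (\<Sum>i\<in>I. u i) \<le> real k}"

definition Uk :: "'a set \<Rightarrow> 'a set \<Rightarrow> nat \<Rightarrow> ('a \<Rightarrow> real) \<Rightarrow> ('a \<Rightarrow> real) set" where
  "Uk I J k xd = {u. (\<forall>i\<in>I. u i \<ge> 0) \<and> (\<forall>i. i \<notin> I \<longrightarrow> u i = 0) \<and>
                   (\<Sum>j\<in>J. u j) \<le> real k \<and> (\<forall>j\<in>J. u j \<le> xd j) \<and>
                   (\<forall>i\<in>I. i \<notin> J \<longrightarrow> u i = 0)}"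

definition recourse ::
  "'a set \<Rightarrow> 'a set \<Rightarrow> ('a \<Rightarrow> real) \<Rightarrow> ('a \<Rightarrow> real) \<Rightarrow> ('a \<Rightarrow> real)
   \<Rightarrow> ('a \<Rightarrow> real) \<Rightarrow> ('a \<Rightarrow> real) \<Rightarrow> (('a \<Rightarrow> 'a \<Rightarrow> real) \<times> ('a \<Rightarrow> real)) set" where
  "recourse I J d A \<theta> xd u = {(y1, y2).
      (\<forall>i\<in>I. \<forall>j\<in>J. y1 i j \<ge> 0) \<and> (\<forall>i\<in>I. y2 i \<ge> 0) \<and>
      (\<forall>i\<in>I. (\<Sum>j\<in>J. y1 i j) + y2 i \<ge> (1 + \<theta> i * u i) * d i) \<and>
      (\<forall>j\<in>J. (\<Sum>i\<in>I. y1 i j) \<le> A j * xd j) \<and>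
      (\<forall>j\<in>J. (\<Sum>i\<in>I. y1 i j) \<le> A j * (1 - u j))}"

definition recourse_cost ::
  "'a set \<Rightarrow> 'a set \<Rightarrow> ('a \<Rightarrow> 'a \<Rightarrow> real) \<Rightarrow> real
   \<Rightarrow> ('a \<Rightarrow> 'a \<Rightarrow> real) \<times> ('a \<Rightarrow> real) \<Rightarrow> real" where
  "recourse_cost I J c C y = (\<Sum>i\<in>I. \<Sum>j\<in>J. c i j * fst y i j) + (\<Sum>i\<in>I. C * snd y i)"

definition robust_obj ::
  "'a set \<Rightarrow> 'a set \<Rightarrow> ('a \<Rightarrow> real) \<Rightarrow> ('a \<Rightarrow> 'a \<Rightarrow> real) \<Rightarrow> ('a \<Rightarrow> real) \<Rightarrow> real
   \<Rightarrow> real \<Rightarrow> ('a \<Rightarrow> real)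
   \<Rightarrow> (('a \<Rightarrow> 'a \<Rightarrow> real) \<times> ('a \<Rightarrow> real) \<Rightarrow> ('a \<Rightarrow> real) set)
   \<Rightarrow> ('a \<Rightarrow> 'a \<Rightarrow> real) \<times> ('a \<Rightarrow> real) \<Rightarrow> real" where
  "robust_obj I J d c A \<rho> C \<theta> U x =
     (1 - \<rho>) * (\<Sum>i\<in>I. \<Sum>j\<in>J. c i j * fst x i j) +
     \<rho> * (SUP u\<in>U x. INF y\<in>recourse I J d A \<theta> (snd x) u. recourse_cost I J c C y)"

definition equivalent_problems :: "'b set \<Rightarrow> ('b \<Rightarrow> real) \<Rightarrow> ('b \<Rightarrow> real) \<Rightarrow> bool" where
  "equivalent_problems X f g \<longleftrightarrow>
     (INF x\<in>X. f x) = (INF x\<in>X. g x) \<and>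
     (\<forall>x\<in>X. (\<forall>x'\<in>X. f x \<le> f x') \<longleftrightarrow> (\<forall>x'\<in>X. g x \<le> g x'))"

end

theory Submission
  imports Defs
begin

(* Fix a first-stage decision with binary x_d and let Q(u) be the optimal recourse cost under the
   disruption u.  Q is convex, since a convex combination of feasible recourses for u and v is
   feasible for the combined disruption and the cost is linear.  Because theta <= 0, a disruption
   only lowers demand, and disrupting a closed facility removes no capacity; so restricting a
   disruption of U^0 to the open facilities, which lands in U^k(x), can only increase Q.
   Conversely U^k(x) is the box 0 <= u <= 1 on the open facilities cut by sum u <= k, and a
   quasiconvex function attains its maximum over this polytope at a 0/1 point, which lies in U^0:
   a point with fractional coordinates is a convex combination of two points of the polytope with
   fewer fractional coordinates.  Hence the inner suprema, and so the objectives, agree for every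
   first-stage decision.  The bound C >= c_ij enters only through C >= c_jj = 0, which keeps the
   recourse costs bounded below. *)

lemma equivalent_problems_if_eq_on:
  assumes "\<And>x. x \<in> X \<Longrightarrow> f x = g x"
  shows "equivalent_problems X f g"
  using assms unfolding equivalent_problems_def by (auto intro: image_cong)

lemma cINF_convex_combination_le:
  fixes f :: "'b \<Rightarrow> real"
  assumes ne: "Y1 \<noteq> {}" "Y2 \<noteq> {}"
    and bdd: "bdd_below (f ` Y1)" "bdd_below (f ` Y2)" "bdd_below (f ` Y)"
    and t: "0 \<le> t" "t \<le> 1"
    and comb: "\<And>y z. y \<in> Y1 \<Longrightarrow> z \<in> Y2 \<Longrightarrow> \<exists>w\<in>Y. f w \<le> t * f y + (1 - t) * f z"
  shows "(INF w\<in>Y. f w) \<le> t * (INF y\<in>Y1. f y) + (1 - t) * (INF z\<in>Y2. f z)"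
proof (rule field_le_epsilon)
  fix e :: real assume "0 < e"
  then obtain y z where y: "y \<in> Y1" "f y < (INF y\<in>Y1. f y) + e"
    and z: "z \<in> Y2" "f z < (INF z\<in>Y2. f z) + e"
    using cINF_less_iff[OF ne(1) bdd(1)] cINF_less_iff[OF ne(2) bdd(2)]
    by (meson less_add_same_cancel1)
  obtain w where w: "w \<in> Y" "f w \<le> t * f y + (1 - t) * f z"
    using comb[OF y(1) z(1)] by blast
  have "(INF w\<in>Y. f w) \<le> f w"
    using bdd(3) w(1) by (rule cINF_lower)
  also have "\<dots> \<le> t * ((INF y\<in>Y1. f y) + e) + (1 - t) * ((INF z\<in>Y2. f z) + e)"
    using w(2) y(2) z(2) t by (smt (verit) mult_left_mono)
  finally show "(INF w\<in>Y. f w) \<le> t * (INF y\<in>Y1. f y) + (1 - t) * (INF z\<in>Y2. f z) + e"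
    by (simp add: algebra_simps)
qed

definition capped_box :: "'a set \<Rightarrow> nat \<Rightarrow> ('a \<Rightarrow> real) set" where
  "capped_box S k = {u. (\<forall>i\<in>S. 0 \<le> u i \<and> u i \<le> 1) \<and> (\<forall>i. i \<notin> S \<longrightarrow> u i = 0) \<and>
                        (\<Sum>i\<in>S. u i) \<le> real k}"

definition fractional_coords :: "'a set \<Rightarrow> ('a \<Rightarrow> real) \<Rightarrow> 'a set" where
  "fractional_coords S u = {i\<in>S. u i \<noteq> 0 \<and> u i \<noteq> 1}"

lemma fractional_coords_psubset:
  assumes "\<And>i. i \<in> S \<Longrightarrow> i \<notin> fractional_coords S u \<Longrightarrow> v i = u i"
    and "a \<in> fractional_coords S u" and "v a \<in> {0, 1}"
  shows "fractional_coords S v \<subset> fractional_coords S u"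
  using assms unfolding fractional_coords_def by fastforce

lemma capped_box_fractional_coord:
  assumes "u \<in> capped_box S k" "a \<in> fractional_coords S u"
  shows "a \<in> S" "0 < u a" "u a < 1"
  using assms unfolding capped_box_def fractional_coords_def by force+

lemma capped_box_split_pair:
  assumes S: "finite S" and u: "u \<in> capped_box S k"
    and a: "a \<in> fractional_coords S u" and b: "b \<in> fractional_coords S u" and "a \<noteq> b"
  obtains P M t where "P \<in> capped_box S k" "M \<in> capped_box S k"
    "fractional_coords S P \<subset> fractional_coords S u" "fractional_coords S M \<subset> fractional_coords S u"
    "0 \<le> t" "t \<le> 1" "u = (\<lambda>i. t * P i + (1 - t) * M i)"
proof -
  note ua = capped_box_fractional_coord[OF u a] and ub = capped_box_fractional_coord[OF u b]
  define \<delta> where "\<delta> j = (if j = a then 1 else if j = b then -1 else 0 :: real)" for j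
  define shift where "shift s j = u j + s * \<delta> j" for s j
  have shift_in: "shift s \<in> capped_box S k" if "0 \<le> u a + s" "u a + s \<le> 1" "0 \<le> u b - s" "u b - s \<le> 1" for s
  proof -
    have "(\<Sum>j\<in>S. \<delta> j) = 0"
      using S ua(1) ub(1) \<open>a \<noteq> b\<close> unfolding \<delta>_def by (simp add: sum.If_cases Int_absorb1)
    then have "(\<Sum>j\<in>S. shift s j) = (\<Sum>j\<in>S. u j)"
      unfolding shift_def by (simp add: sum.distrib flip: sum_distrib_left)
    then show ?thesis
      using u that ua(1) ub(1) unfolding capped_box_def shift_def \<delta>_def by auto
  qed
  have shift_frac: "fractional_coords S (shift s) \<subset> fractional_coords S u"
    if "shift s a \<in> {0, 1} \<or> shift s b \<in> {0, 1}" for s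
  proof -
    have "shift s i = u i" if "i \<in> S" "i \<notin> fractional_coords S u" for i
      using that a b unfolding shift_def \<delta>_def by auto
    then show ?thesis
      using that fractional_coords_psubset a b by metis
  qed
  \<comment> \<open>The largest steps along e_a - e_b in either direction keeping u in the box; each makes u a
     or u b integral.\<close>
  define s1 where "s1 = min (1 - u a) (u b)"
  define s2 where "s2 = min (u a) (1 - u b)"
  have "0 < s1" "0 < s2"
    using ua ub unfolding s1_def s2_def by auto
  define t where "t = s2 / (s1 + s2)"
  show thesis
  proof
    show "shift s1 \<in> capped_box S k" "shift (- s2) \<in> capped_box S k"
      using ua ub by (intro shift_in; simp add: s1_def s2_def)+
    show "fractional_coords S (shift s1) \<subset> fractional_coords S u"
      "fractional_coords S (shift (- s2)) \<subset> fractional_coords S u"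
      using \<open>a \<noteq> b\<close> by (intro shift_frac; simp add: shift_def \<delta>_def s1_def s2_def min_def)+
    show "0 \<le> t" "t \<le> 1"
      using \<open>0 < s1\<close> \<open>0 < s2\<close> unfolding t_def by auto
    have "t * s1 - (1 - t) * s2 = 0"
      using \<open>0 < s1\<close> \<open>0 < s2\<close> unfolding t_def by (simp add: field_simps)
    moreover have "t * shift s1 i + (1 - t) * shift (- s2) i = u i + (t * s1 - (1 - t) * s2) * \<delta> i" for i
      unfolding shift_def by (simp add: algebra_simps)
    ultimately show "u = (\<lambda>i. t * shift s1 i + (1 - t) * shift (- s2) i)"
      by simp
  qed
qed

lemma capped_box_split_single:
  assumes S: "finite S" and u: "u \<in> capped_box S k" and a: "fractional_coords S u = {a}"
  obtains P M t where "P \<in> capped_box S k" "M \<in> capped_box S k"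
    "fractional_coords S P \<subset> fractional_coords S u" "fractional_coords S M \<subset> fractional_coords S u"
    "0 \<le> t" "t \<le> 1" "u = (\<lambda>i. t * P i + (1 - t) * M i)"
proof -
  have "a \<in> fractional_coords S u" using a by blast
  note ua = capped_box_fractional_coord[OF u this]
  have split_sum: "(\<Sum>j\<in>S. v j) = v a + (\<Sum>j\<in>S - {a}. v j)" for v :: "'a \<Rightarrow> real"
    using S ua(1) by (rule sum.remove)
  have count: "(\<Sum>j\<in>S - {a}. u j) = real (card {j \<in> S - {a}. u j = 1})"
  proof -
    have "u j \<in> {0, 1}" if "j \<in> S - {a}" for j
      using that a unfolding fractional_coords_def by blast
    then have "(\<Sum>j\<in>S - {a}. u j) = (\<Sum>j\<in>S - {a}. if u j = 1 then 1 else 0)"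
      by (intro sum.cong) auto
    then show ?thesis
      using S by (simp add: sum.If_cases Int_def)
  qed
  have "(\<Sum>j\<in>S - {a}. u j) < real k"
    using u ua split_sum[of u] unfolding capped_box_def by auto
  then have "card {j \<in> S - {a}. u j = 1} < k"
    unfolding count by simp
  then have "1 + (\<Sum>j\<in>S - {a}. u j) \<le> real k"
    unfolding count by (simp flip: of_nat_Suc)
  then have P: "u(a := 1) \<in> capped_box S k"
    using u ua(1) split_sum[of "u(a := 1)"] unfolding capped_box_def by auto
  have M: "u(a := 0) \<in> capped_box S k"
    using u ua split_sum[of u] split_sum[of "u(a := 0)"] unfolding capped_box_def by auto
  have frac: "fractional_coords S (u(a := x)) \<subset> fractional_coords S u" if "x \<in> {0, 1}" for x
    using a that by (intro fractional_coords_psubset[where a = a]) auto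
  have "u = (\<lambda>i. u a * (u(a := 1)) i + (1 - u a) * (u(a := 0)) i)"
    by (auto simp: algebra_simps)
  from that[OF P M frac[of 1, simplified] frac[of 0, simplified] _ _ this] ua show thesis
    by simp
qed

lemma capped_box_split:
  assumes "finite S" "u \<in> capped_box S k" "fractional_coords S u \<noteq> {}"
  obtains P M t where "P \<in> capped_box S k" "M \<in> capped_box S k"
    "fractional_coords S P \<subset> fractional_coords S u" "fractional_coords S M \<subset> fractional_coords S u"
    "0 \<le> t" "t \<le> 1" "u = (\<lambda>i. t * P i + (1 - t) * M i)"
proof -
  obtain a where a: "a \<in> fractional_coords S u"
    using assms(3) by blast
  show thesis
  proof (cases "fractional_coords S u = {a}")
    case True
    show thesis
      using that by (rule capped_box_split_single[OF assms(1,2) True])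
  next
    case False
    then obtain b where "b \<in> fractional_coords S u" "a \<noteq> b"
      using a by blast
    then show thesis
      using that by (rule capped_box_split_pair[OF assms(1,2) a])
  qed
qed

lemma quasiconvex_capped_box_max_at_binary:
  fixes f :: "('a \<Rightarrow> real) \<Rightarrow> real"
  assumes S: "finite S"
    and quasiconvex: "\<And>P M t. P \<in> capped_box S k \<Longrightarrow> M \<in> capped_box S k \<Longrightarrow> 0 \<le> t \<Longrightarrow> t \<le> 1 \<Longrightarrow>
                        f (\<lambda>i. t * P i + (1 - t) * M i) \<le> max (f P) (f M)"
    and u: "u \<in> capped_box S k"
  shows "\<exists>v\<in>capped_box S k. (\<forall>i. v i \<in> {0, 1}) \<and> f u \<le> f v"
  using u
proof (induction "card (fractional_coords S u)" arbitrary: u rule: less_induct)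
  case less
  show ?case
  proof (cases "fractional_coords S u = {}")
    case True
    then have "\<forall>i. u i \<in> {0, 1}"
      using less.prems unfolding capped_box_def fractional_coords_def by auto
    with less.prems show ?thesis by blast
  next
    case False
    obtain P M t where PM: "P \<in> capped_box S k" "M \<in> capped_box S k"
      "fractional_coords S P \<subset> fractional_coords S u" "fractional_coords S M \<subset> fractional_coords S u"
      and t: "0 \<le> t" "t \<le> 1" and u_eq: "u = (\<lambda>i. t * P i + (1 - t) * M i)"
      using capped_box_split[OF S less.prems False] by blast
    have finite_frac: "finite (fractional_coords S u)"
      using S unfolding fractional_coords_def by simp
    obtain vP where vP: "vP \<in> capped_box S k" "\<forall>i. vP i \<in> {0, 1}" "f P \<le> f vP"
      using less.hyps[OF psubset_card_mono[OF finite_frac PM(3)] PM(1)] by blast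
    obtain vM where vM: "vM \<in> capped_box S k" "\<forall>i. vM i \<in> {0, 1}" "f M \<le> f vM"
      using less.hyps[OF psubset_card_mono[OF finite_frac PM(4)] PM(2)] by blast
    have "f u \<le> f vP \<or> f u \<le> f vM"
      using quasiconvex[OF PM(1,2) t] vP(3) vM(3) unfolding u_eq max_def by (auto split: if_splits)
    then show ?thesis
      using vP vM by blast
  qed
qed

lemma recourse_convex_combination:
  assumes "(y1, y2) \<in> recourse I J d A \<theta> xd u" "(z1, z2) \<in> recourse I J d A \<theta> xd v"
    and t: "0 \<le> t" "t \<le> 1"
  shows "(\<lambda>i j. t * y1 i j + (1 - t) * z1 i j, \<lambda>i. t * y2 i + (1 - t) * z2 i)
           \<in> recourse I J d A \<theta> xd (\<lambda>i. t * u i + (1 - t) * v i)"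
proof -
  have mono: "t * a + (1 - t) * b \<le> t * a' + (1 - t) * b'" if "a \<le> a'" "b \<le> b'" for a b a' b' :: real
    using that t by (intro add_mono mult_left_mono) auto
  have y: "\<forall>i\<in>I. \<forall>j\<in>J. 0 \<le> y1 i j" "\<forall>i\<in>I. 0 \<le> y2 i"
      "\<forall>i\<in>I. (1 + \<theta> i * u i) * d i \<le> (\<Sum>j\<in>J. y1 i j) + y2 i"
      "\<forall>j\<in>J. (\<Sum>i\<in>I. y1 i j) \<le> A j * xd j" "\<forall>j\<in>J. (\<Sum>i\<in>I. y1 i j) \<le> A j * (1 - u j)"
    and z: "\<forall>i\<in>I. \<forall>j\<in>J. 0 \<le> z1 i j" "\<forall>i\<in>I. 0 \<le> z2 i"
      "\<forall>i\<in>I. (1 + \<theta> i * v i) * d i \<le> (\<Sum>j\<in>J. z1 i j) + z2 i"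
      "\<forall>j\<in>J. (\<Sum>i\<in>I. z1 i j) \<le> A j * xd j" "\<forall>j\<in>J. (\<Sum>i\<in>I. z1 i j) \<le> A j * (1 - v j)"
    using assms(1,2) unfolding recourse_def by auto
  have row: "(\<Sum>j\<in>J. t * y1 i j + (1 - t) * z1 i j) + (t * y2 i + (1 - t) * z2 i)
      = t * ((\<Sum>j\<in>J. y1 i j) + y2 i) + (1 - t) * ((\<Sum>j\<in>J. z1 i j) + z2 i)" for i
    by (simp add: sum.distrib flip: sum_distrib_left) (simp add: algebra_simps)
  have col: "(\<Sum>i\<in>I. t * y1 i j + (1 - t) * z1 i j)
      = t * (\<Sum>i\<in>I. y1 i j) + (1 - t) * (\<Sum>i\<in>I. z1 i j)" for j
    by (simp add: sum.distrib flip: sum_distrib_left)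
  show ?thesis
    unfolding recourse_def
  proof (clarify, intro conjI ballI)
    fix i j assume "i \<in> I" "j \<in> J"
    then show "0 \<le> t * y1 i j + (1 - t) * z1 i j"
      using y(1) z(1) t by simp
  next
    fix i assume "i \<in> I"
    then show "0 \<le> t * y2 i + (1 - t) * z2 i"
      using y(2) z(2) t by simp
  next
    fix i assume "i \<in> I"
    have "(1 + \<theta> i * (t * u i + (1 - t) * v i)) * d i
        = t * ((1 + \<theta> i * u i) * d i) + (1 - t) * ((1 + \<theta> i * v i) * d i)"
      by (simp add: algebra_simps)
    also have "\<dots> \<le> (\<Sum>j\<in>J. t * y1 i j + (1 - t) * z1 i j) + (t * y2 i + (1 - t) * z2 i)"
      unfolding row using y(3) z(3) \<open>i \<in> I\<close> by (intro mono) auto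
    finally show "(1 + \<theta> i * (t * u i + (1 - t) * v i)) * d i
        \<le> (\<Sum>j\<in>J. t * y1 i j + (1 - t) * z1 i j) + (t * y2 i + (1 - t) * z2 i)" .
  next
    fix j assume "j \<in> J"
    have "(\<Sum>i\<in>I. t * y1 i j + (1 - t) * z1 i j) \<le> t * (A j * xd j) + (1 - t) * (A j * xd j)"
      unfolding col using y(4) z(4) \<open>j \<in> J\<close> by (intro mono) auto
    then show "(\<Sum>i\<in>I. t * y1 i j + (1 - t) * z1 i j) \<le> A j * xd j"
      by (simp add: algebra_simps)
  next
    fix j assume "j \<in> J"
    have "(\<Sum>i\<in>I. t * y1 i j + (1 - t) * z1 i j) \<le> t * (A j * (1 - u j)) + (1 - t) * (A j * (1 - v j))"
      unfolding col using y(5) z(5) \<open>j \<in> J\<close> by (intro mono) auto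
    then show "(\<Sum>i\<in>I. t * y1 i j + (1 - t) * z1 i j) \<le> A j * (1 - (t * u j + (1 - t) * v j))"
      by (simp add: algebra_simps)
  qed
qed

lemma recourse_cost_convex_combination:
  "recourse_cost I J c C (\<lambda>i j. t * y1 i j + (1 - t) * z1 i j, \<lambda>i. t * y2 i + (1 - t) * z2 i)
     = t * recourse_cost I J c C (y1, y2) + (1 - t) * recourse_cost I J c C (z1, z2)"
  unfolding recourse_cost_def
  by (simp add: distrib_left mult.left_commute sum.distrib flip: sum_distrib_left)

lemma U0_restrict_in_capped_box:
  assumes "finite I" "S \<subseteq> I" "u \<in> U0 I k"
  shows "(\<lambda>i. if i \<in> S then u i else 0) \<in> capped_box S k"
proof -
  have "(\<Sum>i\<in>S. u i) \<le> (\<Sum>i\<in>I. u i)"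
    using assms by (intro sum_mono2) (auto simp: U0_def)
  moreover have "\<forall>i\<in>S. u i \<in> {0, 1}"
    using assms(2,3) unfolding U0_def by auto
  ultimately show ?thesis
    using assms unfolding U0_def capped_box_def by auto
qed

lemma binary_capped_box_in_U0:
  assumes "finite I" "S \<subseteq> I" "v \<in> capped_box S k" "\<forall>i. v i \<in> {0, 1}"
  shows "v \<in> U0 I k"
proof -
  have "(\<Sum>i\<in>I. v i) = (\<Sum>i\<in>S. v i)"
    using assms(1-3) unfolding capped_box_def by (intro sum.mono_neutral_right) auto
  then show ?thesis
    using assms unfolding capped_box_def U0_def by auto
qed

lemma Uk_eq_capped_box:
  assumes "finite I" "J \<subseteq> I" "\<forall>j\<in>J. xd j \<in> {0, 1}"
  shows "Uk I J k xd = capped_box {j \<in> J. xd j = 1} k"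
proof (intro set_eqI iffI)
  fix u assume u: "u \<in> Uk I J k xd"
  have closed: "u j = 0" if "j \<notin> {j \<in> J. xd j = 1}" for j
    using u that assms(3) unfolding Uk_def by (cases "j \<in> J"; cases "j \<in> I") force+
  have "(\<Sum>j\<in>J. u j) = (\<Sum>j\<in>{j \<in> J. xd j = 1}. u j)"
    using assms(1,2) closed by (intro sum.mono_neutral_right) (auto intro: finite_subset)
  with u closed assms(2,3) show "u \<in> capped_box {j \<in> J. xd j = 1} k"
    unfolding Uk_def capped_box_def by auto
next
  fix u assume u: "u \<in> capped_box {j \<in> J. xd j = 1} k"
  have "(\<Sum>j\<in>J. u j) = (\<Sum>j\<in>{j \<in> J. xd j = 1}. u j)"
    using assms(1,2) u unfolding capped_box_def
    by (intro sum.mono_neutral_right) (auto intro: finite_subset)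
  with u assms(2,3) show "u \<in> Uk I J k xd"
    unfolding Uk_def capped_box_def by force
qed

locale recourse_problem =
  fixes I J :: "'a set" and d A \<theta> xd :: "'a \<Rightarrow> real" and c :: "'a \<Rightarrow> 'a \<Rightarrow> real" and C :: real
  assumes finite_I: "finite I" and J_subset: "J \<subseteq> I"
    and demand_nonneg: "\<forall>i\<in>I. 0 \<le> d i" and capacity_nonneg: "\<forall>j\<in>J. 0 \<le> A j"
    and unit_cost_nonneg: "\<forall>i\<in>I. \<forall>j\<in>J. 0 \<le> c i j" and penalty_nonneg: "0 \<le> C"
    and demand_change_nonpos: "\<forall>i\<in>I. \<theta> i \<le> 0"
    and open_binary: "\<forall>j\<in>J. xd j \<in> {0, 1}"
begin

definition recourse_value :: "('a \<Rightarrow> real) \<Rightarrow> real" where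
  "recourse_value u = (INF y\<in>recourse I J d A \<theta> xd u. recourse_cost I J c C y)"

lemma recourse_cost_nonneg:
  assumes "y \<in> recourse I J d A \<theta> xd u"
  shows "0 \<le> recourse_cost I J c C y"
  using assms unit_cost_nonneg penalty_nonneg unfolding recourse_def recourse_cost_def
  by (auto intro!: add_nonneg_nonneg sum_nonneg mult_nonneg_nonneg)

lemma bdd_below_recourse_cost: "bdd_below (recourse_cost I J c C ` recourse I J d A \<theta> xd u)"
  using recourse_cost_nonneg by (rule bdd_belowI2)

lemma recourse_value_le: "y \<in> recourse I J d A \<theta> xd u \<Longrightarrow> recourse_value u \<le> recourse_cost I J c C y"
  unfolding recourse_value_def using bdd_below_recourse_cost by (rule cINF_lower)

lemma penalty_only_recourse:
  assumes "\<forall>i\<in>I. 0 \<le> u i \<and> u i \<le> 1"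
  shows "(\<lambda>i j. 0, d) \<in> recourse I J d A \<theta> xd u"
proof -
  have "(1 + \<theta> i * u i) * d i \<le> d i" if "i \<in> I" for i
  proof -
    have "\<theta> i * u i * d i \<le> 0"
      using that assms demand_change_nonpos demand_nonneg
      by (simp add: mult_nonpos_nonneg)
    then show ?thesis by (simp add: algebra_simps)
  qed
  then show ?thesis
    using assms demand_nonneg capacity_nonneg open_binary J_subset unfolding recourse_def by force
qed

lemma recourse_value_convex:
  assumes u: "\<forall>i\<in>I. 0 \<le> u i \<and> u i \<le> 1" and v: "\<forall>i\<in>I. 0 \<le> v i \<and> v i \<le> 1"
    and t: "0 \<le> t" "t \<le> 1"
  shows "recourse_value (\<lambda>i. t * u i + (1 - t) * v i) \<le> t * recourse_value u + (1 - t) * recourse_value v"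
  unfolding recourse_value_def
proof (rule cINF_convex_combination_le[OF _ _ bdd_below_recourse_cost bdd_below_recourse_cost
      bdd_below_recourse_cost t])
  show "recourse I J d A \<theta> xd u \<noteq> {}" "recourse I J d A \<theta> xd v \<noteq> {}"
    using penalty_only_recourse u v by blast+
next
  fix y z
  assume "y \<in> recourse I J d A \<theta> xd u" "z \<in> recourse I J d A \<theta> xd v"
  moreover obtain y1 y2 z1 z2 where yz: "y = (y1, y2)" "z = (z1, z2)"
    by fastforce
  ultimately have "(y1, y2) \<in> recourse I J d A \<theta> xd u" "(z1, z2) \<in> recourse I J d A \<theta> xd v"
    by simp_all
  from recourse_convex_combination[OF this t]
  show "\<exists>w\<in>recourse I J d A \<theta> xd (\<lambda>i. t * u i + (1 - t) * v i).
      recourse_cost I J c C w \<le> t * recourse_cost I J c C y + (1 - t) * recourse_cost I J c C z"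
    unfolding yz recourse_cost_convex_combination[symmetric] by blast
qed

lemma recourse_value_quasiconvex:
  assumes "\<forall>i\<in>I. 0 \<le> u i \<and> u i \<le> 1" "\<forall>i\<in>I. 0 \<le> v i \<and> v i \<le> 1" "0 \<le> t" "t \<le> 1"
  shows "recourse_value (\<lambda>i. t * u i + (1 - t) * v i) \<le> max (recourse_value u) (recourse_value v)"
proof -
  have "t * recourse_value u + (1 - t) * recourse_value v
      \<le> t * max (recourse_value u) (recourse_value v) + (1 - t) * max (recourse_value u) (recourse_value v)"
    using assms(3,4) by (intro add_mono mult_left_mono) auto
  with recourse_value_convex[OF assms] show ?thesis
    by (simp add: algebra_simps)
qed

lemma recourse_antimono:
  assumes "\<forall>i\<in>I. 0 \<le> v i \<and> v i \<le> u i \<and> u i \<le> 1" "\<forall>j\<in>J. xd j = 1 \<longrightarrow> v j = u j"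
  shows "recourse I J d A \<theta> xd v \<subseteq> recourse I J d A \<theta> xd u"
proof -
  have demand: "(1 + \<theta> i * u i) * d i \<le> (1 + \<theta> i * v i) * d i" if "i \<in> I" for i
    using that assms(1) demand_change_nonpos demand_nonneg
    by (intro mult_right_mono) (auto intro: mult_left_mono_neg)
  have capacity: "s \<le> A j * (1 - u j)" if "j \<in> J" "s \<le> A j * xd j" "s \<le> A j * (1 - v j)" for j s
  proof (cases "xd j = 1")
    case True
    with that assms(2) show ?thesis by simp
  next
    case False
    then have "xd j = 0" using that(1) open_binary by auto
    moreover have "0 \<le> A j * (1 - u j)"
      using that(1) assms(1) J_subset capacity_nonneg by auto
    ultimately show ?thesis using that(2) by simp
  qed
  show ?thesis
  proof
    fix y assume "y \<in> recourse I J d A \<theta> xd v"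
    then obtain y1 y2 where y: "y = (y1, y2)" "\<forall>i\<in>I. \<forall>j\<in>J. 0 \<le> y1 i j" "\<forall>i\<in>I. 0 \<le> y2 i"
      "\<forall>i\<in>I. (1 + \<theta> i * v i) * d i \<le> (\<Sum>j\<in>J. y1 i j) + y2 i"
      "\<forall>j\<in>J. (\<Sum>i\<in>I. y1 i j) \<le> A j * xd j" "\<forall>j\<in>J. (\<Sum>i\<in>I. y1 i j) \<le> A j * (1 - v j)"
      unfolding recourse_def by blast
    have "\<forall>i\<in>I. (1 + \<theta> i * u i) * d i \<le> (\<Sum>j\<in>J. y1 i j) + y2 i"
      using demand y(4) by (meson order_trans)
    moreover have "\<forall>j\<in>J. (\<Sum>i\<in>I. y1 i j) \<le> A j * (1 - u j)"
      using capacity y(5,6) by blast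
    ultimately show "y \<in> recourse I J d A \<theta> xd u"
      using y unfolding recourse_def by blast
  qed
qed

lemma recourse_value_antimono:
  assumes "\<forall>i\<in>I. 0 \<le> v i \<and> v i \<le> u i \<and> u i \<le> 1" "\<forall>j\<in>J. xd j = 1 \<longrightarrow> v j = u j"
  shows "recourse_value u \<le> recourse_value v"
proof -
  have "\<forall>i\<in>I. 0 \<le> v i \<and> v i \<le> 1"
    using assms(1) by fastforce
  then have "recourse I J d A \<theta> xd v \<noteq> {}"
    using penalty_only_recourse by blast
  from cINF_superset_mono[OF this bdd_below_recourse_cost recourse_antimono[OF assms]] show ?thesis
    unfolding recourse_value_def by blast
qed

lemma SUP_U0_eq_SUP_Uk:
  "(SUP u\<in>U0 I k. recourse_value u) = (SUP u\<in>Uk I J k xd. recourse_value u)"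
proof -
  define S where "S = {j \<in> J. xd j = 1}"
  have S: "S \<subseteq> I" using J_subset unfolding S_def by blast
  have Uk: "Uk I J k xd = capped_box S k"
    unfolding S_def using finite_I J_subset open_binary by (rule Uk_eq_capped_box)
  have unit_U0: "\<forall>i\<in>I. 0 \<le> u i \<and> u i \<le> 1" if "u \<in> U0 I k" for u
    using that unfolding U0_def by auto
  have unit_Uk: "\<forall>i\<in>I. 0 \<le> u i \<and> u i \<le> 1" if "u \<in> capped_box S k" for u
  proof
    fix i show "0 \<le> u i \<and> u i \<le> 1"
      using that unfolding capped_box_def by (cases "i \<in> S") auto
  qed
  have bdd: "bdd_above (recourse_value ` U)" if "\<forall>u\<in>U. \<forall>i\<in>I. 0 \<le> u i \<and> u i \<le> 1" for U
  proof (rule bdd_aboveI2)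
    fix u assume "u \<in> U"
    with that show "recourse_value u \<le> recourse_cost I J c C (\<lambda>i j. 0, d)"
      by (intro recourse_value_le penalty_only_recourse) blast
  qed
  have "(SUP u\<in>U0 I k. recourse_value u) \<le> (SUP u\<in>capped_box S k. recourse_value u)"
  proof (rule cSUP_mono)
    show "U0 I k \<noteq> {}" unfolding U0_def by auto
    show "bdd_above (recourse_value ` capped_box S k)" using unit_Uk by (intro bdd) blast
    fix u assume u: "u \<in> U0 I k"
    let ?v = "\<lambda>i. if i \<in> S then u i else 0"
    have "?v \<in> capped_box S k" using finite_I S u by (rule U0_restrict_in_capped_box)
    moreover have "recourse_value u \<le> recourse_value ?v"
      using unit_U0[OF u] S_def by (intro recourse_value_antimono) auto
    ultimately show "\<exists>v\<in>capped_box S k. recourse_value u \<le> recourse_value v" by blast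
  qed
  moreover have "(SUP u\<in>capped_box S k. recourse_value u) \<le> (SUP u\<in>U0 I k. recourse_value u)"
  proof (rule cSUP_mono)
    show "capped_box S k \<noteq> {}" unfolding capped_box_def by auto
    show "bdd_above (recourse_value ` U0 I k)" using unit_U0 by (intro bdd) blast
    fix u assume "u \<in> capped_box S k"
    with quasiconvex_capped_box_max_at_binary[OF finite_subset[OF S finite_I]]
      recourse_value_quasiconvex[OF unit_Uk unit_Uk]
    obtain v where "v \<in> capped_box S k" "\<forall>i. v i \<in> {0, 1}" "recourse_value u \<le> recourse_value v"
      by blast
    then show "\<exists>v\<in>U0 I k. recourse_value u \<le> recourse_value v"
      using binary_capped_box_in_U0[OF finite_I S] by blast
  qed
  ultimately show ?thesis
    unfolding Uk by (rule antisym)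
qed

end

theorem corollary13:
  fixes I J :: "'a set" and d A \<theta> :: "'a \<Rightarrow> real" and c :: "'a \<Rightarrow> 'a \<Rightarrow> real"
    and p k :: nat and \<rho> C :: real
  assumes "finite I" and "J \<subseteq> I"
    and "\<forall>i\<in>I. d i \<ge> 0" and "\<forall>j\<in>J. A j \<ge> 0"
    and "\<forall>i\<in>I. \<forall>j\<in>J. c i j \<ge> 0"
    and "\<forall>i\<in>J. c i i = 0"
    and "p > 0" and "k > 0"
    and "0 \<le> \<rho>" and "\<rho> \<le> 1"
    and "\<forall>i\<in>I. \<forall>j\<in>J. c i j \<le> C"
    and "\<forall>i\<in>I. \<theta> i \<le> 0"
  shows "equivalent_problems (first_stage I J d A p)
           (robust_obj I J d c A \<rho> C \<theta> (\<lambda>x. U0 I k))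
           (robust_obj I J d c A \<rho> C \<theta> (\<lambda>x. Uk I J k (snd x)))"
proof (rule equivalent_problems_if_eq_on)
  fix x assume "x \<in> first_stage I J d A p"
  then obtain xc xd where x: "x = (xc, xd)" and xd: "\<forall>j\<in>J. xd j \<in> {0, 1}" "(\<Sum>j\<in>J. xd j) = real p"
    unfolding first_stage_def by auto
  then obtain j where "j \<in> J"
    using \<open>p > 0\<close> by fastforce
  then have "0 \<le> C"
    using assms(2,6,11) by force
  then interpret recourse_problem I J d A \<theta> xd c C
    using assms xd(1) by unfold_locales auto
  show "robust_obj I J d c A \<rho> C \<theta> (\<lambda>x. U0 I k) x = robust_obj I J d c A \<rho> C \<theta> (\<lambda>x. Uk I J k (snd x)) x"
    using SUP_U0_eq_SUP_Uk unfolding robust_obj_def recourse_value_def x by simp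
qed

end
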